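(* Let $X$ be a finite set and let $c$ be a choice correspondence on $X$. If $c$ is rational, then $r^{c}(A)=c(A)$ for every menu $A$.
   Context: A menu is a nonempty subset of $X$. A choice correspondence is a map $c$ assigning to each menu $A$ a nonempty subset $c(A)\subseteq A$. A weak order is a complete and transitive binary relation on $X$. For a weak order $R$ and menu $A$, $\max(A,R)=\{x\in A: xRy \text{ for all } y\in A\}$. The choice correspondence $c$ is rational if there exists a weak order $R$ on $X$ with $c(A)=\max(A,R)$ for every menu $A$. For a menu $A$, $r^{c}(A)=\{x\in A: c(A\setminus\{x\})\neq c(A)\}$ (with the convention that for a singleton $A=\{x\}$ the removal of $x$ counts as changing the choice, so $r^c(\{x\})=\{x\}$; in particular $c(A)\subseteq r^c(A)$ always). *)

theory Defs
  imports Main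
begin

definition menu :: "'a set \<Rightarrow> 'a set \<Rightarrow> bool" where
  "menu X A \<longleftrightarrow> A \<noteq> {} \<and> A \<subseteq> X"

definition choice_corr :: "'a set \<Rightarrow> ('a set \<Rightarrow> 'a set) \<Rightarrow> bool" where
  "choice_corr X c \<longleftrightarrow> (\<forall>A. menu X A \<longrightarrow> c A \<noteq> {} \<and> c A \<subseteq> A)"

definition weak_order :: "'a set \<Rightarrow> ('a \<Rightarrow> 'a \<Rightarrow> bool) \<Rightarrow> bool" where
  "weak_order X R \<longleftrightarrow>
     (\<forall>x\<in>X. \<forall>y\<in>X. R x y \<or> R y x) \<and>
     (\<forall>x\<in>X. \<forall>y\<in>X. \<forall>z\<in>X. R x y \<longrightarrow> R y z \<longrightarrow> R x z)"

definition maxR :: "'a set \<Rightarrow> ('a \<Rightarrow> 'a \<Rightarrow> bool) \<Rightarrow> 'a set" where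
  "maxR A R = {x \<in> A. \<forall>y\<in>A. R x y}"

definition rational :: "'a set \<Rightarrow> ('a set \<Rightarrow> 'a set) \<Rightarrow> bool" where
  "rational X c \<longleftrightarrow> (\<exists>R. weak_order X R \<and> (\<forall>A. menu X A \<longrightarrow> c A = maxR A R))"

(* r^c(A); removing x from a singleton {x} counts as changing the choice *)
definition rc :: "('a set \<Rightarrow> 'a set) \<Rightarrow> 'a set \<Rightarrow> 'a set" where
  "rc c A = {x \<in> A. A - {x} = {} \<or> c (A - {x}) \<noteq> c A}"

end

theory Submission
  imports Defs
begin

(* Removing an element x from a menu can change the choice only if x was chosen: dropping a
   chosen element always changes it, and dropping an unchosen x is harmless for a maximiser,
   because some y in the menu is strictly preferred to x, so everything that beats the rest of
   the menu beats y and hence x. *)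

lemma maxR_Diff_non_maximal:
  assumes wo: "weak_order X R" and "A \<subseteq> X" and "x \<in> A" and "x \<notin> maxR A R"
  shows "maxR (A - {x}) R = maxR A R"
proof
  show "maxR A R \<subseteq> maxR (A - {x}) R"
    using \<open>x \<notin> maxR A R\<close> unfolding maxR_def by blast
next
  obtain y where "y \<in> A" and not_Rxy: "\<not> R x y"
    using \<open>x \<in> A\<close> \<open>x \<notin> maxR A R\<close> unfolding maxR_def by blast
  with wo \<open>A \<subseteq> X\<close> \<open>x \<in> A\<close> have "R y x" and "y \<noteq> x"
    unfolding weak_order_def by blast+
  show "maxR (A - {x}) R \<subseteq> maxR A R"
  proof
    fix z assume z: "z \<in> maxR (A - {x}) R"
    then have "z \<in> A" and "R z y"
      using \<open>y \<in> A\<close> \<open>y \<noteq> x\<close> unfolding maxR_def by auto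
    with \<open>R y x\<close> wo \<open>A \<subseteq> X\<close> \<open>x \<in> A\<close> \<open>y \<in> A\<close> have "R z x"
      unfolding weak_order_def by blast
    with z show "z \<in> maxR A R"
      unfolding maxR_def by blast
  qed
qed

lemma choice_subset_rc:
  assumes "choice_corr X c" and "menu X A"
  shows "c A \<subseteq> rc c A"
proof
  fix x assume "x \<in> c A"
  with assms have "x \<in> A"
    unfolding choice_corr_def by blast
  moreover have "c (A - {x}) \<noteq> c A" if "A - {x} \<noteq> {}"
  proof -
    from that assms(2) have "menu X (A - {x})"
      unfolding menu_def by blast
    with assms(1) have "x \<notin> c (A - {x})"
      unfolding choice_corr_def by blast
    with \<open>x \<in> c A\<close> show ?thesis by blast
  qed
  ultimately show "x \<in> rc c A"
    unfolding rc_def by blast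
qed

lemma rc_subset_maxR:
  assumes "weak_order X R" and c_maxR: "\<And>B. menu X B \<Longrightarrow> c B = maxR B R" and "menu X A"
  shows "rc c A \<subseteq> maxR A R"
proof
  fix x assume x: "x \<in> rc c A"
  show "x \<in> maxR A R"
  proof (rule ccontr)
    assume non_max: "x \<notin> maxR A R"
    have "x \<in> A" and "A \<subseteq> X"
      using x \<open>menu X A\<close> unfolding rc_def menu_def by auto
    obtain y where "y \<in> A" and "\<not> R x y"
      using \<open>x \<in> A\<close> non_max unfolding maxR_def by blast
    with \<open>weak_order X R\<close> \<open>A \<subseteq> X\<close> \<open>x \<in> A\<close> have "A - {x} \<noteq> {}"
      unfolding weak_order_def by blast
    with \<open>A \<subseteq> X\<close> have "menu X (A - {x})"
      unfolding menu_def by blast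
    then have "c (A - {x}) = c A"
      using c_maxR \<open>menu X A\<close> maxR_Diff_non_maximal[OF \<open>weak_order X R\<close> \<open>A \<subseteq> X\<close> \<open>x \<in> A\<close> non_max]
      by simp
    with x \<open>A - {x} \<noteq> {}\<close> show False
      unfolding rc_def by blast
  qed
qed

theorem lemma3:
  fixes X :: "'a set" and c :: "'a set \<Rightarrow> 'a set"
  assumes "finite X"
    and "choice_corr X c"
    and "rational X c"
    and "menu X A"
  shows "rc c A = c A"
proof -
  obtain R where "weak_order X R" and c_maxR: "\<And>B. menu X B \<Longrightarrow> c B = maxR B R"
    using \<open>rational X c\<close> unfolding rational_def by blast
  have "rc c A \<subseteq> c A"
    using rc_subset_maxR[OF \<open>weak_order X R\<close> c_maxR \<open>menu X A\<close>] c_maxR[OF \<open>menu X A\<close>] by simp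
  with choice_subset_rc[OF \<open>choice_corr X c\<close> \<open>menu X A\<close>] show ?thesis
    by blast
qed

end
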